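(* Let $A(x)=x^3$ on $J=\mathbb R$ and $\Gamma=\{x+iA(x):x\in\mathbb R\}$. There exist $\delta_0=\delta_0(A)>0$ and $c_0=c_0(A)\in(0,1)$ such that $$\mathtt S[\mathrm{Re}K_\Gamma](\mathbf z)\ge c_0\,M_\epsilon^2$$ for $\mathbf z=(-\epsilon\alpha-i\epsilon^3\alpha^3,\ 0,\ \epsilon\beta+i\epsilon^3\beta^3)$, for all $\alpha,\beta\in[1/2,1]$ and all $0<\epsilon<\min\{1,\delta_0\}$, where $M_\epsilon$ is the Lipschitz constant of the restriction of $A'$ to the interval $(-\epsilon,\epsilon)$.
   Context: $s(x)=\sqrt{1+(A'(x))^2}$. The kernel (normalizing factor $1/(2\pi)$ omitted) is $K_\Gamma(w,z)=\dfrac{A'(x)-i}{s(x)\,[\,x-y+i(A(x)-A(y))\,]}$ for $w=x+iA(x)$, $z=y+iA(y)$, $x\neq y$; $\mathrm{Re}K_\Gamma$ is its real part. For a real-valued $K$ and distinct $z_1,z_2,z_3$, $\mathtt S[K](\mathbf z)=\sum_{\sigma\in S_3}K(z_{\sigma(1)},z_{\sigma(2)})K(z_{\sigma(1)},z_{\sigma(3)})$. The Lipschitz constant of $A'$ on $(-\epsilon,\epsilon)$ is $\sup_{x\neq y\in(-\epsilon,\epsilon)}|A'(x)-A'(y)|/|x-y|$. *)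

theory Defs
  imports "HOL-Analysis.Analysis" "HOL-Combinatorics.Permutations"
begin

definition cubeA :: "real \<Rightarrow> real" where
  "cubeA x = x ^ 3"

definition arcfac :: "(real \<Rightarrow> real) \<Rightarrow> real \<Rightarrow> real" where
  "arcfac A x = sqrt (1 + (deriv A x)\<^sup>2)"

text \<open>Kernel K_Gamma(w,z) for w = x + i A(x), z = y + i A(y) on the graph of A
  (so x = Re w, y = Re z); normalizing factor 1/(2 pi) omitted.\<close>
definition KGamma :: "(real \<Rightarrow> real) \<Rightarrow> complex \<Rightarrow> complex \<Rightarrow> complex" where
  "KGamma A w z =
     (let x = Re w; y = Re z in
      (complex_of_real (deriv A x) - \<i>) /
      (complex_of_real (arcfac A x) *
       (complex_of_real (x - y) + \<i> * complex_of_real (A x - A y))))"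

definition ReKGamma :: "(real \<Rightarrow> real) \<Rightarrow> complex \<Rightarrow> complex \<Rightarrow> real" where
  "ReKGamma A w z = Re (KGamma A w z)"

definition symS :: "(complex \<Rightarrow> complex \<Rightarrow> real) \<Rightarrow> complex \<Rightarrow> complex \<Rightarrow> complex \<Rightarrow> real" where
  "symS K z1 z2 z3 =
     (let pt = (\<lambda>i::nat. if i = 1 then z1 else if i = 2 then z2 else z3) in
      \<Sum>\<sigma> | \<sigma> permutes {1::nat,2,3}.
        K (pt (\<sigma> 1)) (pt (\<sigma> 2)) * K (pt (\<sigma> 1)) (pt (\<sigma> 3)))"

definition lipconst :: "(real \<Rightarrow> real) \<Rightarrow> real \<Rightarrow> real" where
  "lipconst f eps =
     Sup {\<bar>f x - f y\<bar> / \<bar>x - y\<bar> | x y. x \<in> {-eps<..<eps} \<and> y \<in> {-eps<..<eps} \<and> x \<noteq> y}"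

end

theory Submission
  imports Defs
begin

text \<open>On the cubic the kernel has the closed form
  Re K(w,z) = (2x + y) / (s(x) (1 + (x^2 + xy + y^2)^2)) with x = Re w, y = Re z,
  and near the origin the denominators lie between 1 and 5/4. Hence each product
  K(z_i,z_j) K(z_i,z_k) is at least half its numerator when that is nonnegative and at least
  the numerator itself otherwise. For the real parts -a, 0, b with a, b in [eps/2, eps] this
  gives S >= 4a^2 - 6ab + 4b^2 >= a^2 + b^2 >= eps^2/2, while A'(x) = 3x^2 has Lipschitz
  constant at most 6 eps on (-eps, eps); so c0 = 1/72 works.\<close>

lemma symS_eq:
  "symS K z1 z2 z3 = 2 * (K z1 z2 * K z1 z3 + K z2 z1 * K z2 z3 + K z3 z1 * K z3 z2)"
proof -
  have "{p. p permutes {3::nat}} = {id}" by simp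
  then show ?thesis
    unfolding symS_def Let_def
    by (simp add: sum_over_permutations_insert transpose_def algebra_simps)
qed

lemma Re_tangent_div_chord:
  "Re ((of_real d - \<i>) / (of_real s * (of_real u + \<i> * of_real v))) =
     (d * u - v) / (s * (u\<^sup>2 + v\<^sup>2))"
proof -
  have "of_real s * (of_real u + \<i> * of_real v) = Complex (s * u) (s * v)"
    by (simp add: complex_eq_iff)
  moreover have "Re ((of_real d - \<i>) / Complex (s * u) (s * v)) =
      (s * (d * u - v)) / (s * (s * (u\<^sup>2 + v\<^sup>2)))"
    by (simp add: Re_divide cmod_power2 power2_eq_square algebra_simps)
  also have "\<dots> = (d * u - v) / (s * (u\<^sup>2 + v\<^sup>2))"
    by (cases "s = 0") simp_all
  ultimately show ?thesis
    by simp
qed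

lemma ReKGamma_eq:
  "ReKGamma A w z =
     (deriv A (Re w) * (Re w - Re z) - (A (Re w) - A (Re z))) /
     (arcfac A (Re w) * ((Re w - Re z)\<^sup>2 + (A (Re w) - A (Re z))\<^sup>2))"
  unfolding ReKGamma_def KGamma_def Let_def by (rule Re_tangent_div_chord)

lemma deriv_cubeA: "deriv cubeA x = 3 * x\<^sup>2"
  unfolding cubeA_def by (rule DERIV_imp_deriv) (auto intro!: derivative_eq_intros)

definition cube_kernel_den :: "real \<Rightarrow> real \<Rightarrow> real" where
  "cube_kernel_den x y = sqrt (1 + 9 * x ^ 4) * (1 + (x\<^sup>2 + x * y + y\<^sup>2)\<^sup>2)"

lemma ReKGamma_cubeA:
  assumes "Re w \<noteq> Re z"
  shows "ReKGamma cubeA w z = (2 * Re w + Re z) / cube_kernel_den (Re w) (Re z)"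
proof -
  define x y where "x = Re w" and "y = Re z"
  define q where "q = x\<^sup>2 + x * y + y\<^sup>2"
  have "(x - y)\<^sup>2 \<noteq> 0" using assms by (simp add: x_def y_def)
  have arc: "arcfac cubeA x = sqrt (1 + 9 * x ^ 4)"
    unfolding arcfac_def deriv_cubeA by (simp add: power2_eq_square power4_eq_xxxx)
  have num: "3 * x\<^sup>2 * (x - y) - (x ^ 3 - y ^ 3) = (x - y)\<^sup>2 * (2 * x + y)"
    by algebra
  have den: "(x - y)\<^sup>2 + (x ^ 3 - y ^ 3)\<^sup>2 = (x - y)\<^sup>2 * (1 + q\<^sup>2)"
    unfolding q_def by algebra
  show ?thesis
    unfolding ReKGamma_eq deriv_cubeA cube_kernel_den_def
    using \<open>(x - y)\<^sup>2 \<noteq> 0\<close>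
    by (simp add: x_def[symmetric] y_def[symmetric] q_def[symmetric] arc cubeA_def num den)
qed

lemma cube_kernel_den_bounds:
  assumes "\<bar>x\<bar> \<le> 1/4" "\<bar>y\<bar> \<le> 1/4"
  shows "1 \<le> cube_kernel_den x y" "cube_kernel_den x y \<le> 5/4"
proof -
  define q where "q = x\<^sup>2 + x * y + y\<^sup>2"
  have x4: "x ^ 4 \<le> 1/256"
    using power_mono[OF assms(1), of 4] by (simp add: power_abs power_divide)
  have "q = (x + y/2)\<^sup>2 + 3/4 * y\<^sup>2"
    unfolding q_def by (simp add: power2_eq_square algebra_simps)
  then have "0 \<le> q"
    by simp
  moreover have "x\<^sup>2 \<le> 1/16" "y\<^sup>2 \<le> 1/16" "\<bar>x * y\<bar> \<le> 1/16"
    using power_mono[OF assms(1), of 2] power_mono[OF assms(2), of 2]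
      mult_mono[OF assms] by (simp_all add: power_abs power_divide abs_mult)
  then have "q \<le> 3/16"
    unfolding q_def by (auto simp: abs_le_iff)
  ultimately have q2: "q\<^sup>2 \<le> 9/256"
    using power_mono[of q "3/16" 2] by (simp add: power_divide)
  have "1 \<le> 1 + 9 * x ^ 4"
    by simp
  then have "sqrt (1 + 9 * x ^ 4) \<le> 1 + 9 * x ^ 4"
    using mult_right_mono[of 1 "1 + 9 * x ^ 4" "1 + 9 * x ^ 4"]
    by (intro real_le_lsqrt) (auto simp: power2_eq_square)
  then have "cube_kernel_den x y \<le> (1 + 9/256) * (1 + 9/256)"
    unfolding cube_kernel_den_def q_def[symmetric]
    using x4 q2 by (intro mult_mono) auto
  then show "cube_kernel_den x y \<le> 5/4" by simp
  show "1 \<le> cube_kernel_den x y"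
    unfolding cube_kernel_den_def
    by (intro mult_ge1_I real_sqrt_ge_one) (simp_all add: zero_le_even_power)
qed

lemma min_half_le_divide:
  fixes p D :: real
  assumes "1 \<le> D" "D \<le> 2"
  shows "min p (p / 2) \<le> p / D"
proof (cases "0 \<le> p")
  case True
  then have "p / 2 \<le> p / D"
    using assms by (intro divide_left_mono) auto
  then show ?thesis
    using min.cobounded2[of p "p / 2"] by linarith
next
  case False
  then have "p \<le> p / D"
    using assms mult_left_mono_neg[of 1 D p] by (simp add: le_divide_eq)
  then show ?thesis
    using min.cobounded1[of p "p / 2"] by linarith
qed

lemma ReKGamma_cubeA_mult_ge:
  assumes "\<bar>Re w\<bar> \<le> 1/4" "\<bar>Re z\<bar> \<le> 1/4" "\<bar>Re u\<bar> \<le> 1/4"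
    and "Re w \<noteq> Re z" "Re w \<noteq> Re u"
  defines "p \<equiv> (2 * Re w + Re z) * (2 * Re w + Re u)"
  shows "min p (p / 2) \<le> ReKGamma cubeA w z * ReKGamma cubeA w u"
proof -
  define D where "D = cube_kernel_den (Re w) (Re z) * cube_kernel_den (Re w) (Re u)"
  note den_z = cube_kernel_den_bounds[OF assms(1,2)]
    and den_u = cube_kernel_den_bounds[OF assms(1,3)]
  have "1 \<le> D"
    unfolding D_def using den_z(1) den_u(1) by (rule mult_ge1_I)
  moreover have "D \<le> 5/4 * (5/4)"
    unfolding D_def using den_z den_u by (intro mult_mono) auto
  ultimately have "min p (p / 2) \<le> p / D"
    by (intro min_half_le_divide) auto
  also have "p / D = ReKGamma cubeA w z * ReKGamma cubeA w u"
    unfolding D_def p_def ReKGamma_cubeA[OF assms(4)] ReKGamma_cubeA[OF assms(5)] by simp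
  finally show ?thesis .
qed

lemma lipconst_bounds:
  assumes "0 < e"
    and lip: "\<And>x y. x \<in> {-e<..<e} \<Longrightarrow> y \<in> {-e<..<e} \<Longrightarrow>
      \<bar>f x - f y\<bar> \<le> L * \<bar>x - y\<bar>"
  shows "0 \<le> lipconst f e" "lipconst f e \<le> L"
proof -
  define Q where "Q = {\<bar>f x - f y\<bar> / \<bar>x - y\<bar> | x y.
    x \<in> {-e<..<e} \<and> y \<in> {-e<..<e} \<and> x \<noteq> y}"
  have Q_le: "t \<le> L" if "t \<in> Q" for t
    using that lip by (auto simp: Q_def divide_le_eq)
  have Q_mem: "\<bar>f 0 - f (e/2)\<bar> / \<bar>0 - e/2\<bar> \<in> Q"
    unfolding Q_def using assms(1) by (intro CollectI exI[of _ 0] exI[of _ "e/2"]) auto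
  have "lipconst f e = Sup Q"
    unfolding lipconst_def Q_def ..
  moreover have "0 \<le> Sup Q"
    using cSup_upper[OF Q_mem bdd_aboveI[OF Q_le]]
    by (meson abs_ge_zero divide_nonneg_nonneg order_trans)
  moreover have "Sup Q \<le> L"
    using Q_mem Q_le by (intro cSup_least) auto
  ultimately show "0 \<le> lipconst f e" "lipconst f e \<le> L"
    by simp_all
qed

lemma deriv_cubeA_lipschitz:
  assumes "x \<in> {-e<..<e}" "y \<in> {-e<..<e}"
  shows "\<bar>deriv cubeA x - deriv cubeA y\<bar> \<le> 6 * e * \<bar>x - y\<bar>"
proof -
  have "3 * x\<^sup>2 - 3 * y\<^sup>2 = 3 * (x + y) * (x - y)"
    by algebra
  then have "\<bar>deriv cubeA x - deriv cubeA y\<bar> = 3 * \<bar>x + y\<bar> * \<bar>x - y\<bar>"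
    by (simp only: deriv_cubeA abs_mult abs_numeral)
  also have "\<dots> \<le> 6 * e * \<bar>x - y\<bar>"
    using assms by (intro mult_right_mono) auto
  finally show ?thesis .
qed

lemma symS_ReKGamma_cubeA_ge:
  assumes "0 < e" "e \<le> 1/4" "a \<in> {e/2..e}" "b \<in> {e/2..e}" "Re z1 = -a" "Re z3 = b"
  shows "e\<^sup>2 / 2 \<le> symS (ReKGamma cubeA) z1 0 z3"
proof -
  have a: "e/2 \<le> a" "a \<le> e" and b: "e/2 \<le> b" "b \<le> e"
    using assms(3,4) by auto
  have small: "\<bar>Re z1\<bar> \<le> 1/4" "\<bar>Re 0\<bar> \<le> 1/4" "\<bar>Re z3\<bar> \<le> 1/4"
    using assms a b by auto
  have distinct: "Re z1 \<noteq> Re 0" "Re z1 \<noteq> Re z3" "Re 0 \<noteq> Re z1" "Re 0 \<noteq> Re z3"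
    "Re z3 \<noteq> Re z1" "Re z3 \<noteq> Re 0"
    using assms a b by auto
  have "0 \<le> a * (2 * a - b)" "0 \<le> b * (2 * b - a)" "- (a * b) \<le> 0"
    using a b assms(1) by simp_all
  moreover have
    "(2 * Re z1 + Re 0) * (2 * Re z1 + Re z3) = 2 * (a * (2 * a - b))"
    "(2 * Re 0 + Re z1) * (2 * Re 0 + Re z3) = - (a * b)"
    "(2 * Re z3 + Re z1) * (2 * Re z3 + Re 0) = 2 * (b * (2 * b - a))"
    using assms(5,6) by (simp_all add: algebra_simps)
  ultimately have K1: "a * (2 * a - b) \<le> ReKGamma cubeA z1 0 * ReKGamma cubeA z1 z3"
    and K2: "- (a * b) \<le> ReKGamma cubeA 0 z1 * ReKGamma cubeA 0 z3"
    and K3: "b * (2 * b - a) \<le> ReKGamma cubeA z3 z1 * ReKGamma cubeA z3 0"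
    using ReKGamma_cubeA_mult_ge[OF small(1,2,3) distinct(1,2)]
      ReKGamma_cubeA_mult_ge[OF small(2,1,3) distinct(3,4)]
      ReKGamma_cubeA_mult_ge[OF small(3,1,2) distinct(5,6)]
    by (simp_all add: min_absorb1 min_absorb2 mult.commute)
  have "e\<^sup>2 / 2 \<le> a\<^sup>2 + b\<^sup>2"
    using power_mono[OF a(1), of 2] power_mono[OF b(1), of 2] assms(1)
    by (simp add: power_divide)
  also have "\<dots> \<le> 2 * (a * (2 * a - b) - a * b + b * (2 * b - a))"
    using zero_le_power2[of "a - b"] by (simp add: power2_eq_square algebra_simps)
  also have "\<dots> \<le> symS (ReKGamma cubeA) z1 0 z3"
    unfolding symS_eq using K1 K2 K3 by simp
  finally show ?thesis .
qed

theorem lemma1p4: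
  shows "\<exists>\<delta>0::real. \<delta>0 > 0 \<and> (\<exists>c0::real. 0 < c0 \<and> c0 < 1 \<and>
    (\<forall>\<alpha> \<beta> \<epsilon> :: real. \<alpha> \<in> {1/2..1} \<longrightarrow> \<beta> \<in> {1/2..1} \<longrightarrow>
       0 < \<epsilon> \<longrightarrow> \<epsilon> < min 1 \<delta>0 \<longrightarrow>
       symS (ReKGamma cubeA)
         (Complex (- \<epsilon> * \<alpha>) (- (\<epsilon> ^ 3 * \<alpha> ^ 3)))
         0
         (Complex (\<epsilon> * \<beta>) (\<epsilon> ^ 3 * \<beta> ^ 3))
       \<ge> c0 * (lipconst (deriv cubeA) \<epsilon>)\<^sup>2))"
proof (intro exI conjI allI impI)
  fix \<alpha> \<beta> \<epsilon> :: real
  assume "\<alpha> \<in> {1/2..1}" "\<beta> \<in> {1/2..1}" "0 < \<epsilon>" "\<epsilon> < min 1 (1/4)"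
  then have "\<epsilon> * \<alpha> \<in> {\<epsilon>/2..\<epsilon>}" "\<epsilon> * \<beta> \<in> {\<epsilon>/2..\<epsilon>}" "\<epsilon> \<le> 1/4"
    by (auto simp: mult_left_le)
  then have S: "\<epsilon>\<^sup>2 / 2 \<le> symS (ReKGamma cubeA)
      (Complex (- \<epsilon> * \<alpha>) (- (\<epsilon> ^ 3 * \<alpha> ^ 3))) 0 (Complex (\<epsilon> * \<beta>) (\<epsilon> ^ 3 * \<beta> ^ 3))"
    using \<open>0 < \<epsilon>\<close> by (intro symS_ReKGamma_cubeA_ge) auto
  have "0 \<le> lipconst (deriv cubeA) \<epsilon>" "lipconst (deriv cubeA) \<epsilon> \<le> 6 * \<epsilon>"
    using lipconst_bounds[OF \<open>0 < \<epsilon>\<close> deriv_cubeA_lipschitz] by auto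
  then have "1/72 * (lipconst (deriv cubeA) \<epsilon>)\<^sup>2 \<le> 1/72 * (6 * \<epsilon>)\<^sup>2"
    by (intro mult_left_mono power_mono) auto
  with S show "symS (ReKGamma cubeA)
      (Complex (- \<epsilon> * \<alpha>) (- (\<epsilon> ^ 3 * \<alpha> ^ 3))) 0 (Complex (\<epsilon> * \<beta>) (\<epsilon> ^ 3 * \<beta> ^ 3))
    \<ge> 1/72 * (lipconst (deriv cubeA) \<epsilon>)\<^sup>2"
    by (simp add: power2_eq_square)
qed simp_all

end
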